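(* Let $\Pi$ be a max-FGPP with constants satisfying $\frac{\alpha_1}{2}\ge\alpha_2$. Let $\mathcal{I}=(G=(V,E),k,p)$ be an instance of $\Pi$ and define the instance $f(\mathcal{I})=(U,\mathcal{S},w,k',p')$ of the maximization version of $k'$-WEC by: $U=V$; $\mathcal{S}=\bigcup_{i=1}^k\mathcal{S}_i$, where $\mathcal{S}_i$ is the family of node-sets of connected subgraphs of $G$ on exactly $i$ nodes; $w(S)=\mathrm{val}(S)$ for all $S\in\mathcal{S}$; $k'=k$ and $p'=p$. Then $\mathcal{I}$ is a yes-instance of $\Pi$ if and only if $f(\mathcal{I})$ is a yes-instance of the maximization version of $k'$-WEC.
   Context: Graphs are finite, simple and undirected. For $G=(V,E)$ and $X\subseteq V$, $E(X)$ is the set of edges with both endpoints in $X$, $E(X,V\setminus X)$ the set of edges with exactly one endpoint in $X$, and $\mathrm{val}(X)=\alpha_1|E(X)|+\alpha_2|E(X,V\setminus X)|$. The max-FGPP $\Pi$ defined by $\alpha_1,\alpha_2\in\mathbb{R}$: given $G=(V,E)$, $k\in\mathbb{N}$ and $p\in\mathbb{R}$, decide whether there is $X\subseteq V$ with $|X|=k$ and $\mathrm{val}(X)\ge p$. Maximization version of Weighted $k'$-Exact Cover ($k'$-WEC): given a universe $U$, a family $\mathcal{S}$ of nonempty subsets of $U$, a function $w:\mathcal{S}\to\mathbb{R}$, $k'\in\mathbb{N}$ and $p'\in\mathbb{R}$, decide whether there is a subfamily $\mathcal{S}'\subseteq\mathcal{S}$ of pairwise disjoint sets with $|\bigcup\mathcal{S}'|=k'$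 and $\sum_{S\in\mathcal{S}'}w(S)\ge p'$. *)

theory Defs
  imports Complex_Main
begin

definition simple_graph :: "'a set \<Rightarrow> 'a set set \<Rightarrow> bool" where
  "simple_graph V E \<longleftrightarrow> finite V \<and>
     (\<forall>e\<in>E. \<exists>u v. e = {u, v} \<and> u \<noteq> v \<and> u \<in> V \<and> v \<in> V)"

definition inner_edges :: "'a set set \<Rightarrow> 'a set \<Rightarrow> 'a set set" where
  "inner_edges E X = {e \<in> E. e \<subseteq> X}"

definition cut_edges :: "'a set set \<Rightarrow> 'a set \<Rightarrow> 'a set set" where
  "cut_edges E X = {e \<in> E. card (e \<inter> X) = 1}"

definition val :: "real \<Rightarrow> real \<Rightarrow> 'a set set \<Rightarrow> 'a set \<Rightarrow> real" where
  "val a1 a2 E X = a1 * real (card (inner_edges E X)) + a2 * real (card (cut_edges E X))"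

definition fgpp_yes :: "real \<Rightarrow> real \<Rightarrow> 'a set \<Rightarrow> 'a set set \<Rightarrow> nat \<Rightarrow> real \<Rightarrow> bool" where
  "fgpp_yes a1 a2 V E k p \<longleftrightarrow> (\<exists>X. X \<subseteq> V \<and> card X = k \<and> val a1 a2 E X \<ge> p)"

definition induces_connected :: "'a set set \<Rightarrow> 'a set \<Rightarrow> bool" where
  "induces_connected E S \<longleftrightarrow> S \<noteq> {} \<and>
     (\<forall>u\<in>S. \<forall>v\<in>S. (u, v) \<in> (Restr {(x, y). {x, y} \<in> E} S)\<^sup>*)"

definition conn_sets :: "'a set \<Rightarrow> 'a set set \<Rightarrow> nat \<Rightarrow> 'a set set" where
  "conn_sets V E i = {S. S \<subseteq> V \<and> card S = i \<and> induces_connected E S}"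

definition wec_family :: "'a set \<Rightarrow> 'a set set \<Rightarrow> nat \<Rightarrow> 'a set set" where
  "wec_family V E k = (\<Union>i\<in>{1..k}. conn_sets V E i)"

definition wec_yes :: "'a set \<Rightarrow> 'a set set \<Rightarrow> ('a set \<Rightarrow> real) \<Rightarrow> nat \<Rightarrow> real \<Rightarrow> bool" where
  "wec_yes U \<S> w k' p' \<longleftrightarrow> (\<exists>\<S>'. \<S>' \<subseteq> \<S> \<and>
      (\<forall>A\<in>\<S>'. \<forall>B\<in>\<S>'. A \<noteq> B \<longrightarrow> A \<inter> B = {}) \<and>
      card (\<Union>\<S>') = k' \<and> (\<Sum>S\<in>\<S>'. w S) \<ge> p')"

end

theory Submission
  imports Defs
begin

text \<open>An edge joining disjoint sets A and B
  counts \<open>a1\<close> in val (A \<union> B) but \<open>a2\<close> in each of val A and val B, so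
  val (A \<union> B) = val A + val B + (a1 - 2 a2) |E(A, B)|. Hence, for a1/2 \<ge> a2, the weights of
  an exact cover sum to at most the value of its union, a k-set of nodes. Conversely the connected
  components of G[X] are members of \<S> covering X exactly, and as no edge runs between them their
  weights sum to exactly val X.\<close>

lemma simple_graph_finite_edges:
  assumes "simple_graph V E"
  shows "finite E"
proof (rule finite_subset)
  show "E \<subseteq> Pow V" using assms unfolding simple_graph_def by fastforce
  show "finite (Pow V)" using assms unfolding simple_graph_def by simp
qed

lemma simple_graph_card_edge:
  assumes "simple_graph V E" "e \<in> E"
  shows "card e = 2"
  using assms unfolding simple_graph_def by (fastforce simp: card_2_iff)

definition edge_val :: "real \<Rightarrow> real \<Rightarrow> 'a set \<Rightarrow> 'a set \<Rightarrow> real" where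
  "edge_val a1 a2 X e = (if e \<subseteq> X then a1 else 0) + (if card (e \<inter> X) = 1 then a2 else 0)"

lemma val_eq_sum_edge_val:
  assumes "finite E"
  shows "val a1 a2 E X = (\<Sum>e\<in>E. edge_val a1 a2 X e)"
  using assms
  by (simp add: val_def inner_edges_def cut_edges_def edge_val_def sum.distrib sum.If_cases Int_def)

lemma val_empty:
  assumes "\<forall>e\<in>E. e \<noteq> {}"
  shows "val a1 a2 E {} = 0"
  using assms by (auto simp: val_def inner_edges_def cut_edges_def)

lemma edge_val_pair:
  assumes "u \<noteq> v"
  shows "edge_val a1 a2 X {u, v} =
           (if u \<in> X \<and> v \<in> X then a1 else 0) + (if (u \<in> X) \<noteq> (v \<in> X) then a2 else 0)"
  using assms by (cases "u \<in> X"; cases "v \<in> X") (simp_all add: edge_val_def)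

lemma edge_val_Un:
  assumes "card e = 2" "A \<inter> B = {}"
  shows "edge_val a1 a2 (A \<union> B) e = edge_val a1 a2 A e + edge_val a1 a2 B e
           + (if e \<inter> A \<noteq> {} \<and> e \<inter> B \<noteq> {} then a1 - 2 * a2 else 0)"
proof -
  obtain u v where e: "e = {u, v}" "u \<noteq> v" using assms(1) by (meson card_2_iff)
  have meets: "{u, v} \<inter> Y \<noteq> {} \<longleftrightarrow> u \<in> Y \<or> v \<in> Y" for Y by blast
  have "u \<notin> A \<or> u \<notin> B" "v \<notin> A \<or> v \<notin> B" using assms(2) by blast+
  then show ?thesis
    unfolding e(1) meets edge_val_pair[OF e(2)]
    by (cases "u \<in> A"; cases "v \<in> A"; cases "u \<in> B"; cases "v \<in> B") simp_all
qed

lemma val_Un_disjoint: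
  assumes "finite E" "\<forall>e\<in>E. card e = 2" "A \<inter> B = {}"
  shows "val a1 a2 E (A \<union> B) = val a1 a2 E A + val a1 a2 E B
           + (a1 - 2 * a2) * card {e \<in> E. e \<inter> A \<noteq> {} \<and> e \<inter> B \<noteq> {}}"
proof -
  have "val a1 a2 E (A \<union> B) = (\<Sum>e\<in>E. edge_val a1 a2 A e + edge_val a1 a2 B e
           + (if e \<inter> A \<noteq> {} \<and> e \<inter> B \<noteq> {} then a1 - 2 * a2 else 0))"
    using assms by (simp add: val_eq_sum_edge_val edge_val_Un)
  then show ?thesis
    using assms(1) by (simp add: val_eq_sum_edge_val sum.distrib sum.If_cases Int_def)
qed

lemma sum_val_le_val_Union:
  assumes "finite E" "\<forall>e\<in>E. card e = 2" "a2 \<le> a1 / 2"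
    and "finite P" "pairwise disjnt P"
  shows "(\<Sum>S\<in>P. val a1 a2 E S) \<le> val a1 a2 E (\<Union>P)"
  using assms(4,5)
proof (induction P rule: finite_induct)
  case empty
  show ?case using assms(2) val_empty[of E] by force
next
  case (insert T P)
  have "T \<inter> \<Union>P = {}"
    using insert.hyps(2) insert.prems by (auto simp: pairwise_insert disjnt_def)
  have "(\<Sum>S\<in>insert T P. val a1 a2 E S) \<le> val a1 a2 E T + val a1 a2 E (\<Union>P)"
    using insert by (simp add: pairwise_insert)
  also have "\<dots> \<le> val a1 a2 E (T \<union> \<Union>P)"
    using val_Un_disjoint[OF assms(1,2) \<open>T \<inter> \<Union>P = {}\<close>, of a1 a2] assms(3) by simp
  finally show ?case by simp
qed

lemma sum_val_eq_val_Union: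
  assumes "finite E" "\<forall>e\<in>E. card e = 2" "finite P" "pairwise disjnt P"
    and "\<forall>e\<in>E. \<forall>S\<in>P. \<forall>T\<in>P. e \<inter> S \<noteq> {} \<longrightarrow> e \<inter> T \<noteq> {} \<longrightarrow> S = T"
  shows "(\<Sum>S\<in>P. val a1 a2 E S) = val a1 a2 E (\<Union>P)"
  using assms(3-5)
proof (induction P rule: finite_induct)
  case empty
  show ?case using assms(2) val_empty[of E] by force
next
  case (insert T P)
  have "T \<inter> \<Union>P = {}"
    using insert.hyps(2) insert.prems(1) by (auto simp: pairwise_insert disjnt_def)
  moreover have no_edge: "{e \<in> E. e \<inter> T \<noteq> {} \<and> e \<inter> \<Union>P \<noteq> {}} = {}"
    using insert.hyps(2) insert.prems(2) by blast
  ultimately have "val a1 a2 E (T \<union> \<Union>P) = val a1 a2 E T + val a1 a2 E (\<Union>P)"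
    using val_Un_disjoint[OF assms(1,2), of T "\<Union>P" a1 a2] unfolding no_edge by simp
  with insert show ?case by (simp add: pairwise_insert)
qed

definition component :: "'a set set \<Rightarrow> 'a set \<Rightarrow> 'a \<Rightarrow> 'a set" where
  "component E X v = {u \<in> X. (v, u) \<in> (Restr {(x, y). {x, y} \<in> E} X)\<^sup>*}"

definition components :: "'a set set \<Rightarrow> 'a set \<Rightarrow> 'a set set" where
  "components E X = component E X ` X"

lemma sym_Restr_adjacency: "sym (Restr {(x, y). {x, y} \<in> E} C)"
  unfolding sym_def by (auto simp: insert_commute)

lemma component_subset: "component E X v \<subseteq> X"
  unfolding component_def by blast

lemma in_component_self: "v \<in> X \<Longrightarrow> v \<in> component E X v"
  unfolding component_def by blast

lemma component_eq:
  assumes "w \<in> component E X v"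
  shows "component E X w = component E X v"
proof -
  have vw: "(v, w) \<in> (Restr {(x, y). {x, y} \<in> E} X)\<^sup>*"
    using assms unfolding component_def by blast
  then have wv: "(w, v) \<in> (Restr {(x, y). {x, y} \<in> E} X)\<^sup>*"
    by (rule symD[OF sym_rtrancl[OF sym_Restr_adjacency]])
  show ?thesis
    unfolding component_def using rtrancl_trans[OF vw] rtrancl_trans[OF wv] by blast
qed

lemma adjacent_in_component:
  assumes "a \<in> X" "b \<in> X" "{a, b} \<in> E"
  shows "b \<in> component E X a"
  using assms unfolding component_def by blast

text \<open>Every walk inside X from v stays in the component of v, so it is a walk inside that component.\<close>
lemma induces_connected_component:
  assumes "v \<in> X"
  shows "induces_connected E (component E X v)"
proof -
  define C where "C = component E X v"
  let ?R = "\<lambda>Y. Restr {(x, y). {x, y} \<in> E} Y"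
  have reach: "(v, u) \<in> (?R C)\<^sup>*" if "u \<in> C" for u
  proof -
    have "(v, u) \<in> (?R X)\<^sup>*" using that unfolding C_def component_def by blast
    then show ?thesis
    proof (induction rule: rtrancl_induct)
      case base
      show ?case by simp
    next
      case (step y z)
      then have yz: "y \<in> X" "z \<in> X" "{y, z} \<in> E" by auto
      have "y \<in> C" unfolding C_def component_def using step.hyps(1) yz(1) by blast
      moreover have "z \<in> C"
        unfolding C_def component_def using rtrancl_into_rtrancl[OF step.hyps] yz(2) by blast
      ultimately show ?case using step.IH yz(3) by (simp add: rtrancl.rtrancl_into_rtrancl)
    qed
  qed
  have "(u, w) \<in> (?R C)\<^sup>*" if "u \<in> C" "w \<in> C" for u w
    using symD[OF sym_rtrancl[OF sym_Restr_adjacency] reach[OF that(1)]] reach[OF that(2)]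
    by (rule rtrancl_trans)
  moreover have "C \<noteq> {}" using in_component_self[OF assms] unfolding C_def by blast
  ultimately show ?thesis unfolding induces_connected_def C_def by blast
qed

lemma component_eq_if_in:
  assumes "S \<in> components E X" "a \<in> S"
  shows "component E X a = S"
proof -
  obtain v where "S = component E X v" using assms(1) unfolding components_def by blast
  with assms(2) show ?thesis using component_eq[of a E X v] by simp
qed

lemma pairwise_disjnt_components: "pairwise disjnt (components E X)"
proof (rule pairwiseI)
  fix S T assume "S \<in> components E X" "T \<in> components E X" "S \<noteq> T"
  show "disjnt S T"
    unfolding disjnt_def
  proof (rule equals0I)
    fix w assume "w \<in> S \<inter> T"
    then have "component E X w = S" "component E X w = T"
      using component_eq_if_in[OF \<open>S \<in> components E X\<close>]
        component_eq_if_in[OF \<open>T \<in> components E X\<close>] by blast+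
    with \<open>S \<noteq> T\<close> show False by simp
  qed
qed

lemma Union_components: "\<Union>(components E X) = X"
proof
  show "\<Union>(components E X) \<subseteq> X"
    unfolding components_def by (simp add: UN_least component_subset)
  show "X \<subseteq> \<Union>(components E X)"
  proof
    fix v assume "v \<in> X"
    then show "v \<in> \<Union>(components E X)"
      unfolding components_def by (intro UN_I[of v] in_component_self)
  qed
qed

lemma edge_meets_one_component:
  assumes "card e = 2" "e \<in> E" "S \<in> components E X" "T \<in> components E X"
    and "e \<inter> S \<noteq> {}" "e \<inter> T \<noteq> {}"
  shows "S = T"
proof -
  obtain a where a: "a \<in> e" "a \<in> S" using assms(5) by blast
  obtain b where b: "b \<in> e" "b \<in> T" using assms(6) by blast
  have "S \<subseteq> X" "T \<subseteq> X" using Union_upper[OF assms(3)] Union_upper[OF assms(4)]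
    by (simp_all add: Union_components)
  with a b have "a \<in> X" "b \<in> X" by auto
  obtain x y where "e = {x, y}" using assms(1) by (meson card_2_iff)
  with a b have "a = b \<or> {a, b} \<in> E" using assms(2) by (auto simp: insert_commute)
  then have "component E X a = component E X b"
  proof
    assume "{a, b} \<in> E"
    from adjacent_in_component[OF \<open>a \<in> X\<close> \<open>b \<in> X\<close> this]
    show ?thesis by (rule component_eq[symmetric])
  qed simp
  then show ?thesis
    using component_eq_if_in[OF assms(3) a(2)] component_eq_if_in[OF assms(4) b(2)] by simp
qed

lemma components_subset_wec_family:
  assumes "finite X" "X \<subseteq> V" "card X = k"
  shows "components E X \<subseteq> wec_family V E k"
proof
  fix S assume "S \<in> components E X"
  then obtain v where v: "v \<in> X" "S = component E X v" unfolding components_def by blast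
  have "S \<subseteq> X" using component_subset v(2) by simp
  then have "finite S" using assms(1) by (rule finite_subset)
  moreover have "S \<noteq> {}" using in_component_self[OF v(1)] v(2) by auto
  ultimately have "1 \<le> card S" by (simp add: Suc_le_eq card_gt_0_iff)
  moreover have "card S \<le> k" using card_mono[OF assms(1) \<open>S \<subseteq> X\<close>] assms(3) by simp
  moreover have "induces_connected E S" using induces_connected_component[OF v(1)] v(2) by simp
  ultimately show "S \<in> wec_family V E k"
    unfolding wec_family_def conn_sets_def using \<open>S \<subseteq> X\<close> assms(2)
    by (intro UN_I[of "card S"]) auto
qed

lemma sum_val_components:
  assumes "finite E" "\<forall>e\<in>E. card e = 2" "finite X"
  shows "(\<Sum>S\<in>components E X. val a1 a2 E S) = val a1 a2 E X"
proof -
  have "finite (components E X)" unfolding components_def using assms(3) by simp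
  moreover have "\<forall>e\<in>E. \<forall>S\<in>components E X. \<forall>T\<in>components E X.
      e \<inter> S \<noteq> {} \<longrightarrow> e \<inter> T \<noteq> {} \<longrightarrow> S = T"
  proof (intro ballI impI)
    fix e S T assume "e \<in> E" "S \<in> components E X" "T \<in> components E X"
      and "e \<inter> S \<noteq> {}" "e \<inter> T \<noteq> {}"
    with bspec[OF assms(2) \<open>e \<in> E\<close>] show "S = T" by (rule edge_meets_one_component)
  qed
  ultimately show ?thesis
    using sum_val_eq_val_Union[OF assms(1,2) _ pairwise_disjnt_components]
    by (simp add: Union_components)
qed

lemma wec_yes_iff_pairwise_disjnt:
  "wec_yes U \<S> w k' p' \<longleftrightarrow>
     (\<exists>\<S>'\<subseteq>\<S>. pairwise disjnt \<S>' \<and> card (\<Union>\<S>') = k' \<and> p' \<le> sum w \<S>')"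
  by (simp add: wec_yes_def pairwise_def disjnt_def)

lemma wec_yes_if_fgpp_yes:
  assumes "simple_graph V E" "fgpp_yes a1 a2 V E k p"
  shows "wec_yes V (wec_family V E k) (val a1 a2 E) k p"
proof -
  obtain X where X: "X \<subseteq> V" "card X = k" "p \<le> val a1 a2 E X"
    using assms(2) unfolding fgpp_yes_def by blast
  have "finite X" using X(1) assms(1) unfolding simple_graph_def by (auto intro: finite_subset)
  have "(\<Sum>S\<in>components E X. val a1 a2 E S) = val a1 a2 E X"
    using simple_graph_finite_edges[OF assms(1)] simple_graph_card_edge[OF assms(1)] \<open>finite X\<close>
    by (simp add: sum_val_components)
  then show ?thesis
    unfolding wec_yes_iff_pairwise_disjnt
    using components_subset_wec_family[OF \<open>finite X\<close> X(1,2)] X(2,3)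
    by (intro exI[of _ "components E X"] conjI pairwise_disjnt_components)
      (simp_all add: Union_components)
qed

lemma fgpp_yes_if_wec_yes:
  assumes "simple_graph V E" "a2 \<le> a1 / 2" "wec_yes V (wec_family V E k) (val a1 a2 E) k p"
  shows "fgpp_yes a1 a2 V E k p"
proof -
  obtain \<S> where \<S>: "\<S> \<subseteq> wec_family V E k" "pairwise disjnt \<S>"
      "card (\<Union>\<S>) = k" "p \<le> (\<Sum>S\<in>\<S>. val a1 a2 E S)"
    using assms(3) unfolding wec_yes_iff_pairwise_disjnt by blast
  have "\<S> \<subseteq> Pow V" using \<S>(1) unfolding wec_family_def conn_sets_def by auto
  then have "finite \<S>" using assms(1) unfolding simple_graph_def by (simp add: finite_subset)
  have "\<forall>e\<in>E. card e = 2" using simple_graph_card_edge[OF assms(1)] by blast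
  with simple_graph_finite_edges[OF assms(1)] have "p \<le> val a1 a2 E (\<Union>\<S>)"
    using sum_val_le_val_Union[OF _ _ assms(2) \<open>finite \<S>\<close> \<S>(2)] \<S>(4) by fastforce
  moreover have "\<Union>\<S> \<subseteq> V" using \<open>\<S> \<subseteq> Pow V\<close> by auto
  ultimately show ?thesis
    unfolding fgpp_yes_def using \<S>(3) by (intro exI[of _ "\<Union>\<S>"]) simp
qed

theorem lemma1:
  fixes a1 a2 :: real and V :: "'a set" and E :: "'a set set" and k :: nat and p :: real
  assumes "simple_graph V E"
    and "a1 / 2 \<ge> a2"
  shows "fgpp_yes a1 a2 V E k p \<longleftrightarrow> wec_yes V (wec_family V E k) (val a1 a2 E) k p"
  using wec_yes_if_fgpp_yes[OF assms(1)] fgpp_yes_if_wec_yes[OF assms] by blast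

end
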